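(* Let $(M,g)$ be a $2$-dimensional Riemannian manifold with Levi-Civita connection $\nabla$, and let $h=h_{ij}dx^i\otimes dx^j$ be a smooth symmetric Codazzi tensor, i.e. $h_{ij}=h_{ji}$ and $\nabla_ih_{jk}=\nabla_jh_{ik}$ for all $i,j,k$. Let $H=g^{ij}h_{ij}$ and $\mathring{h}_{ij}:=h_{ij}-\frac{H}{2}g_{ij}$. Then \[ 2|\mathring{h}|^2\bigl(|\nabla h|^2-|\nabla H|^2\bigr)=\bigl|\nabla|\mathring{h}|^2\bigr|^2-2\,\mathring{h}_{ij}\,\nabla^i|\mathring{h}|^2\,\nabla^jH . \]
   Context: All norms and contractions are taken with respect to $g$, e.g. $|\mathring h|^2=g^{ik}g^{jl}\mathring h_{ij}\mathring h_{kl}$, $|\nabla h|^2=g^{ia}g^{jb}g^{kc}\nabla_ih_{jk}\nabla_ah_{bc}$, and $\nabla^i=g^{ij}\nabla_j$. *)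

theory Defs
  imports "HOL-Analysis.Analysis"
begin

text \<open>Local coordinate model of a 2-dimensional Riemannian manifold: an open
set U of R^2 (coordinates x^1, x^2, indexed by the type 2), with metric
components g i j and tensor components h i j as real functions on U.\<close>

type_synonym pt = "real ^ 2"

definition pd :: "2 \<Rightarrow> (pt \<Rightarrow> real) \<Rightarrow> pt \<Rightarrow> real" where
  "pd i f x = frechet_derivative f (at x) (axis i 1)"

fun Ck_on :: "nat \<Rightarrow> pt set \<Rightarrow> (pt \<Rightarrow> real) \<Rightarrow> bool" where
  "Ck_on 0 U f = continuous_on U f"
| "Ck_on (Suc k) U f = (f differentiable_on U \<and> continuous_on U f \<and> (\<forall>i. Ck_on k U (pd i f)))"

definition smooth_on :: "pt set \<Rightarrow> (pt \<Rightarrow> real) \<Rightarrow> bool" where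
  "smooth_on U f = (\<forall>k. Ck_on k U f)"

definition riem_metric :: "pt set \<Rightarrow> (2 \<Rightarrow> 2 \<Rightarrow> pt \<Rightarrow> real) \<Rightarrow> bool" where
  "riem_metric U g = (open U \<and> (\<forall>i j. smooth_on U (g i j)) \<and>
     (\<forall>x\<in>U. (\<forall>i j. g i j x = g j i x) \<and>
        (\<forall>v::real^2. v \<noteq> 0 \<longrightarrow> (\<Sum>i\<in>UNIV. \<Sum>j\<in>UNIV. g i j x * v$i * v$j) > 0)))"

definition ginv :: "(2 \<Rightarrow> 2 \<Rightarrow> pt \<Rightarrow> real) \<Rightarrow> 2 \<Rightarrow> 2 \<Rightarrow> pt \<Rightarrow> real" where
  "ginv g i j x = matrix_inv (\<chi> a b. g a b x) $ i $ j"

definition christoffel :: "(2 \<Rightarrow> 2 \<Rightarrow> pt \<Rightarrow> real) \<Rightarrow> 2 \<Rightarrow> 2 \<Rightarrow> 2 \<Rightarrow> pt \<Rightarrow> real" where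
  "christoffel g k i j x = (1/2) * (\<Sum>l\<in>UNIV. ginv g k l x *
      (pd i (g j l) x + pd j (g i l) x - pd l (g i j) x))"

definition covD :: "(2 \<Rightarrow> 2 \<Rightarrow> pt \<Rightarrow> real) \<Rightarrow> (2 \<Rightarrow> 2 \<Rightarrow> pt \<Rightarrow> real) \<Rightarrow> 2 \<Rightarrow> 2 \<Rightarrow> 2 \<Rightarrow> pt \<Rightarrow> real" where
  "covD g h i j k x = pd i (h j k) x
     - (\<Sum>l\<in>UNIV. christoffel g l i j x * h l k x)
     - (\<Sum>l\<in>UNIV. christoffel g l i k x * h j l x)"

definition trH :: "(2 \<Rightarrow> 2 \<Rightarrow> pt \<Rightarrow> real) \<Rightarrow> (2 \<Rightarrow> 2 \<Rightarrow> pt \<Rightarrow> real) \<Rightarrow> pt \<Rightarrow> real" where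
  "trH g h x = (\<Sum>i\<in>UNIV. \<Sum>j\<in>UNIV. ginv g i j x * h i j x)"

definition traceless :: "(2 \<Rightarrow> 2 \<Rightarrow> pt \<Rightarrow> real) \<Rightarrow> (2 \<Rightarrow> 2 \<Rightarrow> pt \<Rightarrow> real) \<Rightarrow> 2 \<Rightarrow> 2 \<Rightarrow> pt \<Rightarrow> real" where
  "traceless g h i j x = h i j x - trH g h x / 2 * g i j x"

definition norm2_2 :: "(2 \<Rightarrow> 2 \<Rightarrow> pt \<Rightarrow> real) \<Rightarrow> (2 \<Rightarrow> 2 \<Rightarrow> pt \<Rightarrow> real) \<Rightarrow> pt \<Rightarrow> real" where
  "norm2_2 g T x = (\<Sum>i\<in>UNIV. \<Sum>j\<in>UNIV. \<Sum>k\<in>UNIV. \<Sum>l\<in>UNIV.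
      ginv g i k x * ginv g j l x * T i j x * T k l x)"

definition norm2_3 :: "(2 \<Rightarrow> 2 \<Rightarrow> pt \<Rightarrow> real) \<Rightarrow> (2 \<Rightarrow> 2 \<Rightarrow> 2 \<Rightarrow> pt \<Rightarrow> real) \<Rightarrow> pt \<Rightarrow> real" where
  "norm2_3 g T x = (\<Sum>i\<in>UNIV. \<Sum>j\<in>UNIV. \<Sum>k\<in>UNIV. \<Sum>a\<in>UNIV. \<Sum>b\<in>UNIV. \<Sum>c\<in>UNIV.
      ginv g i a x * ginv g j b x * ginv g k c x * T i j k x * T a b c x)"

definition grad_norm2 :: "(2 \<Rightarrow> 2 \<Rightarrow> pt \<Rightarrow> real) \<Rightarrow> (pt \<Rightarrow> real) \<Rightarrow> pt \<Rightarrow> real" where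
  "grad_norm2 g f x = (\<Sum>i\<in>UNIV. \<Sum>j\<in>UNIV. ginv g i j x * pd i f x * pd j f x)"

end

theory Submission
  imports Defs
begin

text \<open>Metric compatibility of the Levi-Civita connection gives
\<open>\<nabla>\<^sub>kH = g\<^sup>i\<^sup>j\<nabla>\<^sub>kh\<^sub>i\<^sub>j\<close> and, since \<open>|h\<^sup>\<circ>|\<^sup>2 = |h|\<^sup>2 - H\<^sup>2/2\<close> in dimension two,
\<open>\<nabla>\<^sub>k|h\<^sup>\<circ>|\<^sup>2 = 2 h\<^sup>\<circ>\<^sup>i\<^sup>j\<nabla>\<^sub>kh\<^sub>i\<^sub>j\<close>. After these substitutions both sides of the identity
are polynomials in the components of \<open>g\<^sup>-\<^sup>1\<close>, \<open>h\<close> and \<open>T = \<nabla>h\<close> at a single point.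
By the Codazzi equation and the symmetry of \<open>h\<close> the tensor \<open>T\<close> is totally symmetric, so in
dimension two it has only four independent components, and the identity becomes a polynomial
identity that is checked by expanding into components.\<close>

lemma pd_eq_derivative: "(f has_derivative f') (at x) \<Longrightarrow> pd i f x = f' (axis i 1)"
  using frechet_derivative_at[of f f' x] by (simp add: pd_def)

lemma pd_const [simp]: "pd i (\<lambda>y. c) x = 0"
  by (rule pd_eq_derivative[where f'="\<lambda>_. 0", simplified]) simp

lemma pd_diff:
  assumes "f differentiable at x" "g differentiable at x"
  shows "pd i (\<lambda>y. f y - g y) x = pd i f x - pd i g x"
  using pd_eq_derivative[OF has_derivative_diff[OF assms[unfolded frechet_derivative_works]]]
  by (simp add: pd_def)

lemma pd_mult:
  assumes "f differentiable at x" "g differentiable at x"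
  shows "pd i (\<lambda>y. f y * g y) x = f x * pd i g x + pd i f x * g x"
  using pd_eq_derivative[OF has_derivative_mult[OF assms[unfolded frechet_derivative_works]]]
  by (simp add: pd_def)

lemma pd_divide:
  assumes "f differentiable at x" "g differentiable at x" "g x \<noteq> 0"
  shows "pd i (\<lambda>y. f y / g y) x = (pd i f x * g x - f x * pd i g x) / (g x * g x)"
  using pd_eq_derivative[OF has_derivative_divide'[OF assms(1,2)[unfolded frechet_derivative_works] assms(3)]]
  by (simp add: pd_def)

lemma pd_sum:
  assumes "finite A" "\<And>a. a \<in> A \<Longrightarrow> f a differentiable at x"
  shows "pd i (\<lambda>y. \<Sum>a\<in>A. f a y) x = (\<Sum>a\<in>A. pd i (f a) x)"
proof -
  have "((\<lambda>y. \<Sum>a\<in>A. f a y) has_derivative (\<lambda>v. \<Sum>a\<in>A. frechet_derivative (f a) (at x) v)) (at x)"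
    using assms by (intro has_derivative_sum) (simp add: frechet_derivative_works[symmetric])
  from pd_eq_derivative[OF this, of i] show ?thesis by (simp add: pd_def)
qed

lemma pd_cong_open:
  assumes "open U" "x \<in> U" "\<And>y. y \<in> U \<Longrightarrow> f y = f' y" "f' differentiable at x"
  shows "pd i f x = pd i f' x"
  unfolding pd_def using frechet_derivative_transform_within_open[of f' x U f] assms by metis

lemma differentiable_at_cong_open:
  assumes "open U" "x \<in> U" "\<And>y. y \<in> U \<Longrightarrow> f y = f' y" "f' differentiable at x"
  shows "f differentiable at x"
  using assms unfolding differentiable_def by (metis has_derivative_transform_within_open)

lemma smooth_on_differentiable_at:
  assumes "smooth_on U f" "open U" "x \<in> U"
  shows "f differentiable at x"
proof -
  have "Ck_on (Suc 0) U f" using assms(1) unfolding smooth_on_def by blast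
  with assms(2,3) show ?thesis by (simp add: differentiable_on_eq_differentiable_at)
qed

lemma matrix_inv_right: "invertible A \<Longrightarrow> A ** matrix_inv A = mat 1"
  unfolding invertible_def matrix_inv_def by (rule someI_ex[THEN conjunct1])

lemma matrix_inv_left: "invertible A \<Longrightarrow> matrix_inv A ** A = mat 1"
  unfolding invertible_def matrix_inv_def by (rule someI_ex[THEN conjunct2])

lemma matrix_inv_2x2:
  fixes A :: "real^2^2"
  assumes d: "det A \<noteq> 0"
  shows "matrix_inv A = (\<chi> i j. (if i = 1 then (if j = 1 then A$2$2 else - A$1$2)
      else (if j = 1 then - A$2$1 else A$1$1)) / det A)"
    (is "_ = ?B")
proof -
  have AB: "A ** ?B = mat 1"
    using d by (auto simp: det_2 vec_eq_iff forall_2 matrix_matrix_mult_def sum_2 mat_def field_simps; algebra)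
  have "matrix_inv A = matrix_inv A ** (A ** ?B)"
    by (simp add: AB matrix_mul_rid)
  also have "\<dots> = (matrix_inv A ** A) ** ?B"
    by (rule matrix_mul_assoc)
  also have "\<dots> = ?B"
    using d by (simp add: invertible_det_nz matrix_inv_left matrix_mul_lid)
  finally show ?thesis .
qed

text \<open>The argument \<open>P\<close> stands for the inverse metric
\<open>g\<^sup>i\<^sup>j\<close>, so \<open>raise_indices P h\<close> is \<open>h\<^sup>a\<^sup>b\<close> and \<open>raised_traceless P h\<close> is \<open>h\<^sup>\<circ>\<^sup>a\<^sup>b\<close>.\<close>

definition contract :: "(2 \<Rightarrow> 2 \<Rightarrow> real) \<Rightarrow> (2 \<Rightarrow> 2 \<Rightarrow> real) \<Rightarrow> real" where
  "contract A B = (\<Sum>i\<in>UNIV. \<Sum>j\<in>UNIV. A i j * B i j)"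

definition raise_indices :: "(2 \<Rightarrow> 2 \<Rightarrow> real) \<Rightarrow> (2 \<Rightarrow> 2 \<Rightarrow> real) \<Rightarrow> 2 \<Rightarrow> 2 \<Rightarrow> real" where
  "raise_indices P h a b = (\<Sum>i\<in>UNIV. \<Sum>j\<in>UNIV. P a i * P b j * h i j)"

definition raised_traceless :: "(2 \<Rightarrow> 2 \<Rightarrow> real) \<Rightarrow> (2 \<Rightarrow> 2 \<Rightarrow> real) \<Rightarrow> 2 \<Rightarrow> 2 \<Rightarrow> real" where
  "raised_traceless P h a b = raise_indices P h a b - contract P h / 2 * P a b"

lemma trH_contract: "trH g h y = contract (\<lambda>i j. ginv g i j y) (\<lambda>i j. h i j y)"
  by (simp add: trH_def contract_def)

lemma contract_raised_traceless:
  "contract (raised_traceless P h) X = contract (raise_indices P h) X - contract P h / 2 * contract P X"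
  unfolding contract_def raised_traceless_def
  by (simp add: left_diff_distrib sum_subtractf sum_distrib_left mult.assoc)

lemma inverse_2x2_entries:
  fixes G P :: "2 \<Rightarrow> 2 \<Rightarrow> real"
  assumes "\<And>a c. (\<Sum>b\<in>UNIV. G a b * P b c) = of_bool (a = c)"
  shows "G 1 1 * P 1 1 + G 1 2 * P 2 1 = 1" "G 1 1 * P 1 2 + G 1 2 * P 2 2 = 0"
    "G 2 1 * P 1 1 + G 2 2 * P 2 1 = 0" "G 2 1 * P 1 2 + G 2 2 * P 2 2 = 1"
  using assms[of 1 1] assms[of 1 2] assms[of 2 1] assms[of 2 2] by (simp_all add: sum_2)

lemma norm2_traceless_2x2:
  fixes G P h :: "2 \<Rightarrow> 2 \<Rightarrow> real"
  assumes symmetric: "\<And>i j. P i j = P j i" "\<And>i j. G i j = G j i" "\<And>i j. h i j = h j i"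
    and inv: "\<And>a c. (\<Sum>b\<in>UNIV. G a b * P b c) = of_bool (a = c)"
  shows "(\<Sum>i\<in>UNIV. \<Sum>j\<in>UNIV. \<Sum>k\<in>UNIV. \<Sum>l\<in>UNIV. P i k * P j l *
           (h i j - contract P h / 2 * G i j) * (h k l - contract P h / 2 * G k l))
       = (\<Sum>i\<in>UNIV. \<Sum>j\<in>UNIV. \<Sum>k\<in>UNIV. \<Sum>l\<in>UNIV. P i k * P j l * h i j * h k l)
         - (contract P h)\<^sup>2 / 2"
proof -
  have "P 2 1 = P 1 2" "G 2 1 = G 1 2" "h 2 1 = h 1 2" using symmetric by blast+
  with inverse_2x2_entries[OF inv] show ?thesis
    unfolding contract_def by (simp only: sum_2) algebra
qed

lemma raise_traceless_2x2:
  fixes G P h :: "2 \<Rightarrow> 2 \<Rightarrow> real" and u v :: "2 \<Rightarrow> real"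
  assumes symmetric: "\<And>i j. P i j = P j i" "\<And>i j. G i j = G j i" "\<And>i j. h i j = h j i"
    and inv: "\<And>a c. (\<Sum>b\<in>UNIV. G a b * P b c) = of_bool (a = c)"
  shows "(\<Sum>i\<in>UNIV. \<Sum>j\<in>UNIV. \<Sum>a\<in>UNIV. \<Sum>b\<in>UNIV.
           (h i j - contract P h / 2 * G i j) * P i a * u a * P j b * v b)
       = (\<Sum>a\<in>UNIV. \<Sum>b\<in>UNIV. raised_traceless P h a b * u a * v b)"
proof -
  have "P 2 1 = P 1 2" "G 2 1 = G 1 2" "h 2 1 = h 1 2" using symmetric by blast+
  with inverse_2x2_entries[OF inv] show ?thesis
    unfolding raised_traceless_def raise_indices_def contract_def by (simp only: sum_2) algebra
qed

text \<open>\<open>T\<close> plays the role of \<open>\<nabla>h\<close>; no invertibility or positivity of \<open>P\<close> is needed.\<close>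

lemma codazzi_identity_2x2:
  fixes P h :: "2 \<Rightarrow> 2 \<Rightarrow> real" and T :: "2 \<Rightarrow> 2 \<Rightarrow> 2 \<Rightarrow> real"
  assumes symmetric: "\<And>i j. P i j = P j i" "\<And>i j. h i j = h j i"
    and T_sym: "\<And>i j k. T i j k = T j i k" "\<And>i j k. T i j k = T i k j"
  defines "A \<equiv> raised_traceless P h"
  shows "2 * contract A h *
           ((\<Sum>i\<in>UNIV. \<Sum>j\<in>UNIV. \<Sum>k\<in>UNIV. \<Sum>a\<in>UNIV. \<Sum>b\<in>UNIV. \<Sum>c\<in>UNIV.
               P i a * P j b * P k c * T i j k * T a b c)
            - (\<Sum>i\<in>UNIV. \<Sum>j\<in>UNIV. P i j * contract P (T i) * contract P (T j)))
       = (\<Sum>i\<in>UNIV. \<Sum>j\<in>UNIV. P i j * (2 * contract A (T i)) * (2 * contract A (T j)))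
         - 2 * (\<Sum>a\<in>UNIV. \<Sum>b\<in>UNIV. A a b * (2 * contract A (T a)) * contract P (T b))"
proof -
  have comps: "P 2 1 = P 1 2" "h 2 1 = h 1 2"
    "T 1 2 1 = T 1 1 2" "T 2 1 1 = T 1 1 2" "T 2 1 2 = T 1 2 2" "T 2 2 1 = T 1 2 2"
    using symmetric T_sym by metis+
  show ?thesis
    unfolding A_def raised_traceless_def raise_indices_def contract_def
    by (simp only: sum_2 comps) algebra
qed

locale riemannian_chart =
  fixes U :: "pt set" and g :: "2 \<Rightarrow> 2 \<Rightarrow> pt \<Rightarrow> real"
  assumes metric: "riem_metric U g"
begin

lemma open_domain: "open U"
  using metric by (simp add: riem_metric_def)

lemma metric_differentiable: "y \<in> U \<Longrightarrow> g i j differentiable at y"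
  using metric open_domain by (auto simp: riem_metric_def intro: smooth_on_differentiable_at)

lemma metric_sym: "y \<in> U \<Longrightarrow> g i j y = g j i y"
  using metric by (simp add: riem_metric_def)

lemma pd_metric_sym: "y \<in> U \<Longrightarrow> pd k (g i j) y = pd k (g j i) y"
  by (rule pd_cong_open[OF open_domain]) (auto simp: metric_sym metric_differentiable)

lemma metric_det_pos:
  assumes y: "y \<in> U"
  shows "0 < g 1 1 y * g 2 2 y - g 1 2 y * g 2 1 y"
proof -
  have pos: "0 < (\<Sum>i\<in>UNIV. \<Sum>j\<in>UNIV. g i j y * v$i * v$j)" if "v \<noteq> 0" for v :: "real^2"
    using metric y that by (simp add: riem_metric_def)
  have "(axis 1 1 :: real^2) \<noteq> 0" by (simp add: axis_eq_0_iff)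
  from pos[OF this] have g11: "0 < g 1 1 y" by (simp add: sum_2 axis_def)
  \<comment> \<open>the energy of this vector is \<open>g\<^sub>1\<^sub>1\<close> times the determinant\<close>
  let ?v = "vector [g 1 2 y, - g 1 1 y] :: real^2"
  have "?v \<noteq> 0" using g11 by (auto simp: vec_eq_iff forall_2)
  from pos[OF this] have "0 < g 1 1 y * (g 1 1 y * g 2 2 y - g 1 2 y * g 2 1 y)"
    using metric_sym[OF y, of 2 1] by (simp add: sum_2 algebra_simps power2_eq_square)
  with g11 show ?thesis by (simp add: zero_less_mult_iff)
qed

lemma ginv_2x2:
  assumes "y \<in> U"
  shows "ginv g i j y = (if i = 1 then (if j = 1 then g 2 2 y else - g 1 2 y)
      else (if j = 1 then - g 2 1 y else g 1 1 y)) / (g 1 1 y * g 2 2 y - g 1 2 y * g 2 1 y)"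
  using matrix_inv_2x2[of "\<chi> a b. g a b y"] metric_det_pos[OF assms]
  by (simp add: ginv_def det_2)

lemma ginv_sym: "y \<in> U \<Longrightarrow> ginv g i j y = ginv g j i y"
  using exhaust_2[of i] exhaust_2[of j] by (auto simp: ginv_2x2 metric_sym)

lemma metric_invertible: "y \<in> U \<Longrightarrow> invertible (\<chi> a b. g a b y)"
  using metric_det_pos[of y] by (auto simp: invertible_det_nz det_2)

lemma metric_ginv: "y \<in> U \<Longrightarrow> (\<Sum>b\<in>UNIV. g a b y * ginv g b c y) = of_bool (a = c)"
  using matrix_inv_right[OF metric_invertible]
  by (simp add: ginv_def vec_eq_iff matrix_matrix_mult_def mat_def)

lemma ginv_metric: "y \<in> U \<Longrightarrow> (\<Sum>b\<in>UNIV. ginv g a b y * g b c y) = of_bool (a = c)"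
  using matrix_inv_left[OF metric_invertible]
  by (simp add: ginv_def vec_eq_iff matrix_matrix_mult_def mat_def)

lemma ginv_differentiable:
  assumes x: "x \<in> U"
  shows "ginv g i j differentiable at x"
proof -
  let ?det = "\<lambda>y. g 1 1 y * g 2 2 y - g 1 2 y * g 2 1 y"
  have det: "?det differentiable at x" "?det x \<noteq> 0"
    using metric_differentiable[OF x] metric_det_pos[OF x] by auto
  have cofactor_quotient: "(\<lambda>y. (if i = 1 then (if j = 1 then g 2 2 y else - g 1 2 y)
      else (if j = 1 then - g 2 1 y else g 1 1 y)) / ?det y) differentiable at x"
    using exhaust_2[of i] exhaust_2[of j] metric_differentiable[OF x] det
    by (auto intro!: differentiable_divide)
  show ?thesis
    by (rule differentiable_at_cong_open[OF open_domain x _ cofactor_quotient]) (simp add: ginv_2x2)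
qed

lemma pd_ginv:
  assumes x: "x \<in> U"
  shows "pd k (ginv g i j) x = - (\<Sum>a\<in>UNIV. \<Sum>b\<in>UNIV. ginv g i a x * pd k (g a b) x * ginv g b j x)"
proof -
  note diff = metric_differentiable[OF x] ginv_differentiable[OF x]
  \<comment> \<open>differentiate \<open>g g\<^sup>-\<^sup>1 = 1\<close>, then multiply by \<open>g\<^sup>-\<^sup>1\<close> from the left\<close>
  have product_rule: "(\<Sum>b\<in>UNIV. g a b x * pd k (ginv g b c) x) = - (\<Sum>b\<in>UNIV. pd k (g a b) x * ginv g b c x)"
    for a c
  proof -
    have "pd k (\<lambda>y. \<Sum>b\<in>UNIV. g a b y * ginv g b c y) x = pd k (\<lambda>y. of_bool (a = c)) x"
      by (rule pd_cong_open[OF open_domain x]) (simp_all add: metric_ginv)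
    then show ?thesis by (simp add: pd_sum pd_mult diff sum.distrib eq_neg_iff_add_eq_0)
  qed
  have "pd k (ginv g i j) x = (\<Sum>b\<in>UNIV. of_bool (i = b) * pd k (ginv g b j) x)"
    by simp
  also have "\<dots> = (\<Sum>b\<in>UNIV. (\<Sum>a\<in>UNIV. ginv g i a x * g a b x) * pd k (ginv g b j) x)"
    by (simp add: ginv_metric[OF x])
  also have "\<dots> = (\<Sum>a\<in>UNIV. ginv g i a x * (\<Sum>b\<in>UNIV. g a b x * pd k (ginv g b j) x))"
    unfolding sum_distrib_left sum_distrib_right mult.assoc by (rule sum.swap)
  also have "\<dots> = - (\<Sum>a\<in>UNIV. \<Sum>b\<in>UNIV. ginv g i a x * pd k (g a b) x * ginv g b j x)"
    by (simp add: product_rule sum_distrib_left mult.assoc sum_negf)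
  finally show ?thesis .
qed

end

locale symmetric_tensor_chart = riemannian_chart +
  fixes h :: "2 \<Rightarrow> 2 \<Rightarrow> pt \<Rightarrow> real"
  assumes tensor_smooth: "\<forall>i j. smooth_on U (h i j)"
    and tensor_sym: "\<forall>y\<in>U. \<forall>i j. h i j y = h j i y"
begin

lemma tensor_differentiable: "y \<in> U \<Longrightarrow> h i j differentiable at y"
  using tensor_smooth open_domain by (auto intro: smooth_on_differentiable_at)

lemma pd_tensor_sym: "y \<in> U \<Longrightarrow> pd k (h i j) y = pd k (h j i) y"
  by (rule pd_cong_open[OF open_domain]) (use tensor_sym tensor_differentiable in auto)

lemma symmetric_entries:
  assumes "y \<in> U"
  shows "g 2 1 y = g 1 2 y" "ginv g 2 1 y = ginv g 1 2 y" "h 2 1 y = h 1 2 y"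
    "pd k (g 2 1) y = pd k (g 1 2) y" "pd k (h 2 1) y = pd k (h 1 2) y"
  using assms tensor_sym metric_sym ginv_sym pd_metric_sym pd_tensor_sym by blast+

lemma covD_sym:
  assumes "y \<in> U"
  shows "covD g h k i j y = covD g h k j i y"
  using exhaust_2[of k] exhaust_2[of i] exhaust_2[of j]
  by (auto simp: covD_def sum_2 symmetric_entries[OF assms])

lemma trH_eq: "trH g h = (\<lambda>y. \<Sum>i\<in>UNIV. \<Sum>j\<in>UNIV. ginv g i j y * h i j y)"
  by (simp add: trH_def fun_eq_iff)

lemma norm2_eq: "norm2_2 g h = (\<lambda>y. \<Sum>i\<in>UNIV. \<Sum>j\<in>UNIV. \<Sum>k\<in>UNIV. \<Sum>l\<in>UNIV.
      ginv g i k y * ginv g j l y * h i j y * h k l y)"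
  by (simp add: norm2_2_def fun_eq_iff)

lemma trH_differentiable: "x \<in> U \<Longrightarrow> trH g h differentiable at x"
  by (simp add: trH_eq ginv_differentiable tensor_differentiable)

lemma norm2_differentiable: "x \<in> U \<Longrightarrow> norm2_2 g h differentiable at x"
  by (simp add: norm2_eq ginv_differentiable tensor_differentiable)

lemma pd_trH:
  assumes x: "x \<in> U"
  shows "pd k (trH g h) x = contract (\<lambda>i j. ginv g i j x) (\<lambda>i j. covD g h k i j x)"
proof -
  have "pd k (trH g h) x
      = (\<Sum>i\<in>UNIV. \<Sum>j\<in>UNIV. ginv g i j x * pd k (h i j) x + pd k (ginv g i j) x * h i j x)"
    by (simp add: trH_eq pd_sum pd_mult ginv_differentiable tensor_differentiable x)
  also have "\<dots> = contract (\<lambda>i j. ginv g i j x) (\<lambda>i j. covD g h k i j x)"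
    unfolding pd_ginv[OF x] contract_def covD_def christoffel_def
    using exhaust_2[of k] by (auto simp: sum_2 symmetric_entries[OF x] algebra_simps)
  finally show ?thesis .
qed

lemma pd_norm2:
  assumes x: "x \<in> U"
  shows "pd k (norm2_2 g h) x
    = 2 * contract (raise_indices (\<lambda>i j. ginv g i j x) (\<lambda>i j. h i j x)) (\<lambda>i j. covD g h k i j x)"
proof -
  have "pd k (norm2_2 g h) x
      = (\<Sum>i\<in>UNIV. \<Sum>j\<in>UNIV. \<Sum>k'\<in>UNIV. \<Sum>l\<in>UNIV.
          ginv g i k' x * ginv g j l x * h i j x * pd k (h k' l) x
          + (ginv g i k' x * ginv g j l x * pd k (h i j) x
             + (ginv g i k' x * pd k (ginv g j l) x + pd k (ginv g i k') x * ginv g j l x) * h i j x)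
            * h k' l x)"
    by (simp add: norm2_eq pd_sum pd_mult ginv_differentiable tensor_differentiable x)
  also have "\<dots> = 2 * contract (raise_indices (\<lambda>i j. ginv g i j x) (\<lambda>i j. h i j x)) (\<lambda>i j. covD g h k i j x)"
    unfolding pd_ginv[OF x] contract_def raise_indices_def covD_def christoffel_def
    using exhaust_2[of k] by (auto simp: sum_2 symmetric_entries[OF x] algebra_simps)
  finally show ?thesis .
qed

lemma norm2_contract:
  assumes "y \<in> U"
  shows "norm2_2 g h y = contract (raise_indices (\<lambda>i j. ginv g i j y) (\<lambda>i j. h i j y)) (\<lambda>i j. h i j y)"
  by (simp add: norm2_2_def contract_def raise_indices_def sum_2 symmetric_entries[OF assms] algebra_simps)

lemma norm2_traceless:
  assumes y: "y \<in> U"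
  shows "norm2_2 g (traceless g h) y = norm2_2 g h y - (trH g h y)\<^sup>2 / 2"
  unfolding norm2_2_def traceless_def trH_contract
  by (rule norm2_traceless_2x2) (use y ginv_sym metric_sym tensor_sym metric_ginv in auto)

lemma norm2_traceless_contract:
  assumes "x \<in> U"
  shows "norm2_2 g (traceless g h) x
    = contract (raised_traceless (\<lambda>i j. ginv g i j x) (\<lambda>i j. h i j x)) (\<lambda>i j. h i j x)"
  by (simp add: norm2_traceless norm2_contract trH_contract contract_raised_traceless assms power2_eq_square)

lemma raise_traceless:
  assumes x: "x \<in> U"
  shows "(\<Sum>i\<in>UNIV. \<Sum>j\<in>UNIV. \<Sum>a\<in>UNIV. \<Sum>b\<in>UNIV.
           traceless g h i j x * ginv g i a x * u a * ginv g j b x * v b)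
       = (\<Sum>a\<in>UNIV. \<Sum>b\<in>UNIV. raised_traceless (\<lambda>i j. ginv g i j x) (\<lambda>i j. h i j x) a b * u a * v b)"
  unfolding traceless_def trH_contract
  by (rule raise_traceless_2x2) (use x ginv_sym metric_sym tensor_sym metric_ginv in auto)

lemma pd_norm2_traceless:
  assumes x: "x \<in> U"
  shows "pd k (norm2_2 g (traceless g h)) x
    = 2 * contract (raised_traceless (\<lambda>i j. ginv g i j x) (\<lambda>i j. h i j x)) (\<lambda>i j. covD g h k i j x)"
proof -
  note diff = norm2_differentiable trH_differentiable
  have "pd k (norm2_2 g (traceless g h)) x = pd k (\<lambda>y. norm2_2 g h y - trH g h y * trH g h y / 2) x"
    by (rule pd_cong_open[OF open_domain x]) (simp_all add: norm2_traceless power2_eq_square diff x)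
  also have "\<dots> = pd k (norm2_2 g h) x - trH g h x * pd k (trH g h) x"
    by (simp add: pd_diff pd_divide pd_mult diff x field_simps)
  also have "\<dots> = 2 * contract (raised_traceless (\<lambda>i j. ginv g i j x) (\<lambda>i j. h i j x)) (\<lambda>i j. covD g h k i j x)"
    by (simp add: pd_norm2 pd_trH trH_contract contract_raised_traceless x algebra_simps)
  finally show ?thesis .
qed

end

theorem lemma4p2:
  fixes U :: "(real ^ 2) set"
    and g h :: "2 \<Rightarrow> 2 \<Rightarrow> real ^ 2 \<Rightarrow> real"
  assumes metric: "riem_metric U g"
    and h_smooth: "\<forall>i j. smooth_on U (h i j)"
    and h_sym: "\<forall>x\<in>U. \<forall>i j. h i j x = h j i x"
    and codazzi: "\<forall>x\<in>U. \<forall>i j k. covD g h i j k x = covD g h j i k x"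
    and x: "x \<in> U"
  shows "2 * norm2_2 g (traceless g h) x *
           (norm2_3 g (covD g h) x - grad_norm2 g (trH g h) x)
         = grad_norm2 g (norm2_2 g (traceless g h)) x
           - 2 * (\<Sum>i\<in>UNIV. \<Sum>j\<in>UNIV. \<Sum>a\<in>UNIV. \<Sum>b\<in>UNIV.
                  traceless g h i j x * ginv g i a x * pd a (norm2_2 g (traceless g h)) x
                    * ginv g j b x * pd b (trH g h) x)"
proof -
  interpret symmetric_tensor_chart U g h
    using metric h_smooth h_sym by unfold_locales
  have covD_total_sym: "covD g h i j k x = covD g h j i k x" "covD g h i j k x = covD g h i k j x"
    for i j k
    using codazzi covD_sym x by auto
  show ?thesis
    unfolding raise_traceless[OF x]
    unfolding norm2_3_def grad_norm2_def pd_norm2_traceless[OF x] pd_trH[OF x] norm2_traceless_contract[OF x]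
    by (rule codazzi_identity_2x2) (use covD_total_sym x ginv_sym h_sym in auto)
qed

end
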